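(* Let $\sigma(\boldsymbol\epsilon)$ be the (complex form) covariance matrix of a family of $N$-mode Gaussian states depending differentiably on $\boldsymbol\epsilon$, let $A=K\sigma$, and let $\lambda_{\min}$ be the smallest symplectic eigenvalue of $\sigma$, assumed to satisfy $\lambda_{\min}>1$. For an integer $M\ge 0$ define the remainder $R_M^{ij}=\frac12\sum_{n=M+1}^\infty\operatorname{tr}\big[A^{-n}\partial_iA\,A^{-n}\partial_jA\big]$. Then \[ |R_M^{ij}|\le\frac{\sqrt{\operatorname{tr}[(A\partial_iA)^2]}\,\sqrt{\operatorname{tr}[(A\partial_jA)^2]}}{2\lambda_{\min}^{2(M+1)}(\lambda_{\min}^2-1)}. \]
   Context: Bosonic system with $N$ modes; $\hat{\mathbf A}=(\hat a_1,\dots,\hat a_N,\hat a_1^\dagger,\dots,\hat a_N^\dagger)^T$; $K=\begin{bmatrix}I&0\\0&-I\end{bmatrix}$. For a Gaussian state $\hat\rho$, $\boldsymbol d^m=\operatorname{tr}[\hat\rho\hat{\mathbf A}^m]$, $\Delta\hat{\mathbf A}=\hat{\mathbf A}-\boldsymbol d$, $\sigma^{mn}=\operatorname{tr}[\hat\rho\{\Delta\hat{\mathbf A}^m,(\Delta\hat{\mathbf A}^n)^\dagger\}]$. Symplectic eigenvalues are the positive eigenvalues of $K\sigma$. $\partial_i=\partial/\partial\epsilon_i$. *)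

theory Defs
  imports "HOL-Analysis.Analysis"
begin

text \<open>The N modes are indexed by a finite type 'n; the 2N components of
  the vector (a_1..a_N, a_1^dagger..a_N^dagger) are indexed by 'n + 'n,
  Inl k standing for a_k and Inr k for a_k^dagger.\<close>

type_synonym ('n) cmat = "complex ^ ('n + 'n) ^ ('n + 'n)"

definition Kmat :: "('n::finite) cmat" where
  "Kmat = (\<chi> r c. if r = c then (case r of Inl _ \<Rightarrow> 1 | Inr _ \<Rightarrow> -1) else 0)"

definition adj :: "complex ^ 'm ^ 'k \<Rightarrow> complex ^ 'k ^ 'm" where
  "adj A = (\<chi> r c. cnj (A $ c $ r))"

fun mpow :: "('a::semiring_1) ^ 'm ^ 'm \<Rightarrow> nat \<Rightarrow> 'a ^ 'm ^ 'm" where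
  "mpow A 0 = mat 1"
| "mpow A (Suc n) = A ** mpow A n"

text \<open>Block structure [[a, b], [conj b, conj a]] of matrices in the complex form.\<close>
definition complex_form_block :: "('n::finite) cmat \<Rightarrow> bool" where
  "complex_form_block S \<longleftrightarrow>
     (\<forall>k l. S $ Inr k $ Inr l = cnj (S $ Inl k $ Inl l) \<and>
            S $ Inr k $ Inl l = cnj (S $ Inl k $ Inr l))"

definition symplectic_c :: "('n::finite) cmat \<Rightarrow> bool" where
  "symplectic_c S \<longleftrightarrow> complex_form_block S \<and> S ** Kmat ** adj S = Kmat"

definition diagLL :: "('n::finite \<Rightarrow> real) \<Rightarrow> 'n cmat" where
  "diagLL L = (\<chi> r c. if r = c then complex_of_real (case r of Inl k \<Rightarrow> L k | Inr k \<Rightarrow> L k) else 0)"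

text \<open>Covariance matrix of a Gaussian state (via the Williamson decomposition
  sigma = S diag(L,L) S^dagger, S symplectic, symplectic eigenvalues L_k \<ge> 1).\<close>
definition gaussian_cov :: "('n::finite) cmat \<Rightarrow> bool" where
  "gaussian_cov \<sigma> \<longleftrightarrow>
     (\<exists>S L. symplectic_c S \<and> (\<forall>k. L k \<ge> 1) \<and> \<sigma> = S ** diagLL L ** adj S)"

definition sympl_eigs :: "('n::finite) cmat \<Rightarrow> real set" where
  "sympl_eigs \<sigma> = {l. l > 0 \<and> (\<exists>v. v \<noteq> 0 \<and> (Kmat ** \<sigma>) *v v = complex_of_real l *s v)}"

definition min_sympl_eig :: "('n::finite) cmat \<Rightarrow> real" where
  "min_sympl_eig \<sigma> = Min (sympl_eigs \<sigma>)"

definition pderiv_i :: "(real ^ 'p \<Rightarrow> ('n::finite) cmat) \<Rightarrow> real ^ 'p \<Rightarrow> 'p \<Rightarrow> 'n cmat" where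
  "pderiv_i \<sigma> x i = frechet_derivative \<sigma> (at x) (axis i 1)"

end

theory Submission
  imports Defs
begin

text \<open>Write the Williamson decomposition as \<open>\<sigma> = S D S\<^sup>\<dagger>\<close> with \<open>D = diag(L, L)\<close>.
  Then \<open>A = K\<sigma>\<close> is similar, via \<open>T = S\<^sup>\<dagger>\<close>, to the diagonal matrix \<open>KD = diag(s\<^sub>a d\<^sub>a)\<close>
  with signs \<open>s\<^sub>a = \<plusminus>1\<close> and \<open>d\<^sub>a\<close> running over the symplectic eigenvalues. In that basis
  the \<open>n\<close>-th summand becomes \<open>\<Sum>\<^sub>a\<^sub>,\<^sub>b (s\<^sub>a s\<^sub>b / d\<^sub>a d\<^sub>b)\<^sup>n P\<^sub>a\<^sub>b Q\<^sub>b\<^sub>a\<close> with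
  \<open>P = T \<partial>\<^sub>iA T\<^sup>-\<^sup>1\<close>, \<open>Q = T \<partial>\<^sub>jA T\<^sup>-\<^sup>1\<close>, and \<open>KP\<close>, \<open>KQ\<close> are Hermitian because
  \<open>\<partial>\<^sub>i\<sigma>\<close>, \<open>\<partial>\<^sub>j\<sigma>\<close> are. Each geometric tail in \<open>n\<close> is at most
  \<open>t / (\<lambda>\<^sup>2\<^sup>(\<^sup>M\<^sup>+\<^sup>1\<^sup>) (\<lambda>\<^sup>2 - 1))\<close> times \<open>|P\<^sub>a\<^sub>b Q\<^sub>b\<^sub>a|\<close>, where \<open>t = d\<^sub>a d\<^sub>b \<ge> \<lambda>\<^sup>2\<close>, and
  Cauchy-Schwarz with weights \<open>d\<^sub>a d\<^sub>b\<close> finishes the proof, since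
  \<open>tr[(A \<partial>\<^sub>iA)\<^sup>2] = \<Sum>\<^sub>a\<^sub>,\<^sub>b d\<^sub>a d\<^sub>b |P\<^sub>a\<^sub>b|\<^sup>2\<close>.\<close>

definition diag_mat :: "('m::finite \<Rightarrow> 'a::semiring_1) \<Rightarrow> 'a^'m^'m" where
  "diag_mat f = (\<chi> r c. if r = c then f r else 0)"

lemma diag_mat_mult_nth: "(diag_mat f ** X) $ r $ c = f r * X $ r $ c"
  by (simp add: matrix_matrix_mult_def diag_mat_def if_distrib if_distribR cong: if_cong)

lemma mult_diag_mat_nth: "(X ** diag_mat f) $ r $ c = X $ r $ c * f c"
  by (simp add: matrix_matrix_mult_def diag_mat_def if_distrib cong: if_cong)

lemma diag_mat_mult_vec_nth: "(diag_mat f *v v) $ r = f r * v $ r"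
  by (simp add: matrix_vector_mult_def diag_mat_def if_distrib if_distribR cong: if_cong)

lemma diag_mat_mult_diag_mat: "diag_mat f ** diag_mat g = diag_mat (\<lambda>a. f a * g a)"
  by (simp add: vec_eq_iff diag_mat_mult_nth) (simp add: diag_mat_def)

lemma mat_1_eq_diag_mat: "mat 1 = diag_mat (\<lambda>_. 1)"
  by (simp add: mat_def diag_mat_def)

lemma adj_mult: "adj (A ** B) = adj B ** (adj A :: complex^_^_)"
  by (simp add: vec_eq_iff adj_def matrix_matrix_mult_def mult.commute)

lemma adj_adj [simp]: "adj (adj A) = A"
  by (simp add: vec_eq_iff adj_def)

lemma adj_diag_mat: "adj (diag_mat f) = diag_mat (\<lambda>a. cnj (f a))"
  by (simp add: vec_eq_iff adj_def diag_mat_def)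

lemma adj_mat_1 [simp]: "adj (mat 1 :: complex^'m^'m) = mat 1"
  by (simp add: vec_eq_iff adj_def mat_def)

lemma bounded_linear_adj: "bounded_linear (adj :: complex^'m::finite^'k::finite \<Rightarrow> _)"
proof -
  have "linear (adj :: complex^'m^'k \<Rightarrow> _)"
    by (rule linearI) (simp_all add: vec_eq_iff adj_def complex_cnj_scaleR)
  then show ?thesis
    by (rule linear_conv_bounded_linear[THEN iffD1])
qed

lemma adj_frechet_derivative_hermitian:
  fixes \<sigma> :: "'a::real_normed_vector \<Rightarrow> complex^'m::finite^'m"
  assumes "open U" "x \<in> U" "\<And>y. y \<in> U \<Longrightarrow> adj (\<sigma> y) = \<sigma> y" "\<sigma> differentiable (at x)"
  shows "adj (frechet_derivative \<sigma> (at x) h) = frechet_derivative \<sigma> (at x) h"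
proof -
  define F where "F = frechet_derivative \<sigma> (at x)"
  have F: "(\<sigma> has_derivative F) (at x)"
    using assms(4) frechet_derivative_works F_def by blast
  have "((\<lambda>y. adj (\<sigma> y)) has_derivative (\<lambda>h. adj (F h))) (at x)"
    by (rule bounded_linear.has_derivative[OF bounded_linear_adj F])
  then have "(\<sigma> has_derivative (\<lambda>h. adj (F h))) (at x)"
    by (rule has_derivative_transform_within_open[OF _ assms(1,2)]) (simp add: assms(3))
  then have "(\<lambda>h. adj (F h)) = F"
    using has_derivative_unique F by blast
  then show ?thesis
    unfolding F_def by metis
qed

lemma matrix_inv_eqI:
  fixes A B :: "'a::field^'m::finite^'m"
  assumes "A ** B = mat 1"
  shows "matrix_inv A = B"
proof -
  have BA: "B ** A = mat 1"
    using assms matrix_left_right_inverse by blast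
  have inv: "A ** matrix_inv A = mat 1 \<and> matrix_inv A ** A = mat 1"
    unfolding matrix_inv_def by (rule someI[of _ B]) (simp add: assms BA)
  have "matrix_inv A = matrix_inv A ** (A ** B)"
    using assms by simp
  also have "\<dots> = B"
    using inv by (simp add: matrix_mul_assoc)
  finally show ?thesis .
qed

lemma mpow_similar_diag_mat:
  fixes T Tinv :: "'a::field^'m::finite^'m"
  assumes "Tinv ** T = mat 1"
  shows "mpow (Tinv ** diag_mat e ** T) n = Tinv ** diag_mat (\<lambda>a. e a ^ n) ** T"
proof (induction n)
  case 0
  show ?case
    using assms by (simp add: mat_1_eq_diag_mat[symmetric])
next
  case (Suc n)
  have TTinv: "T ** Tinv = mat 1"
    using assms matrix_left_right_inverse by blast
  have "mpow (Tinv ** diag_mat e ** T) (Suc n)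
      = Tinv ** (diag_mat e ** ((T ** Tinv) ** (diag_mat (\<lambda>a. e a ^ n) ** T)))"
    using Suc by (simp add: matrix_mul_assoc)
  also have "\<dots> = Tinv ** (diag_mat e ** diag_mat (\<lambda>a. e a ^ n)) ** T"
    by (simp add: TTinv matrix_mul_assoc)
  also have "\<dots> = Tinv ** diag_mat (\<lambda>a. e a ^ Suc n) ** T"
    by (simp add: diag_mat_mult_diag_mat)
  finally show ?case .
qed

lemma matrix_inv_similar_diag_mat:
  fixes T Tinv :: "'a::field^'m::finite^'m"
  assumes "Tinv ** T = mat 1" and "\<And>a. f a \<noteq> 0"
  shows "matrix_inv (Tinv ** diag_mat f ** T) = Tinv ** diag_mat (\<lambda>a. inverse (f a)) ** T"
proof (rule matrix_inv_eqI)
  have TTinv: "T ** Tinv = mat 1"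
    using assms(1) matrix_left_right_inverse by blast
  have "(Tinv ** diag_mat f ** T) ** (Tinv ** diag_mat (\<lambda>a. inverse (f a)) ** T)
      = Tinv ** ((diag_mat f ** ((T ** Tinv) ** diag_mat (\<lambda>a. inverse (f a)))) ** T)"
    by (simp only: matrix_mul_assoc)
  also have "\<dots> = mat 1"
    using assms by (simp add: TTinv diag_mat_mult_diag_mat mat_1_eq_diag_mat [symmetric])
  finally show "(Tinv ** diag_mat f ** T) ** (Tinv ** diag_mat (\<lambda>a. inverse (f a)) ** T) = mat 1" .
qed

lemma eigenvalue_similar_diag_mat_iff:
  fixes T Tinv :: "'a::field^'m::finite^'m"
  assumes "Tinv ** T = mat 1"
  shows "(\<exists>v. v \<noteq> 0 \<and> (Tinv ** diag_mat f ** T) *v v = c *s v) \<longleftrightarrow> c \<in> range f"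
proof
  have TTinv: "T ** Tinv = mat 1"
    using assms matrix_left_right_inverse by blast
  assume "\<exists>v. v \<noteq> 0 \<and> (Tinv ** diag_mat f ** T) *v v = c *s v"
  then obtain v where "v \<noteq> 0" and v: "(Tinv ** diag_mat f ** T) *v v = c *s v"
    by blast
  moreover have "Tinv *v (T *v v) = v"
    by (simp add: matrix_vector_mul_assoc assms)
  ultimately have "T *v v \<noteq> 0"
    by force
  then obtain a where a: "(T *v v) $ a \<noteq> 0"
    by (auto simp: vec_eq_iff)
  have "diag_mat f *v (T *v v) = T *v ((Tinv ** diag_mat f ** T) *v v)"
    by (simp add: matrix_vector_mul_assoc matrix_mul_assoc TTinv)
  also have "\<dots> = c *s (T *v v)"
    by (simp add: v vector_scalar_commute)
  finally have "f a * (T *v v) $ a = c * (T *v v) $ a"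
    by (metis diag_mat_mult_vec_nth vector_smult_component)
  then have "f a = c"
    using a by simp
  then show "c \<in> range f"
    by blast
next
  assume "c \<in> range f"
  then obtain a where c: "c = f a"
    by blast
  define v where "v = Tinv *v axis a 1"
  have TTinv: "T ** Tinv = mat 1"
    using assms matrix_left_right_inverse by blast
  have fa: "diag_mat f *v axis a 1 = c *s axis a 1"
    by (simp add: vec_eq_iff diag_mat_mult_vec_nth axis_def c)
  have Tv: "T *v v = axis a 1"
    by (simp add: v_def matrix_vector_mul_assoc TTinv)
  have "(Tinv ** diag_mat f ** T) *v v = Tinv *v (diag_mat f *v (T *v v))"
    by (simp add: matrix_vector_mul_assoc matrix_mul_assoc)
  also have "\<dots> = c *s v"
    unfolding Tv fa by (simp add: v_def vector_scalar_commute)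
  finally have "(Tinv ** diag_mat f ** T) *v v = c *s v" .
  moreover have "v \<noteq> 0"
    using Tv by (force simp: axis_eq_0_iff)
  ultimately show "\<exists>v. v \<noteq> 0 \<and> (Tinv ** diag_mat f ** T) *v v = c *s v"
    by blast
qed

lemma trace_similar_diag_mat_sandwich:
  fixes T Tinv X Y :: "'a::comm_semiring_1^'m::finite^'m"
  shows "trace ((Tinv ** diag_mat g ** T) ** X ** (Tinv ** diag_mat h ** T) ** Y)
     = (\<Sum>a\<in>UNIV. \<Sum>b\<in>UNIV. g a * (T ** X ** Tinv) $ a $ b * h b * (T ** Y ** Tinv) $ b $ a)"
proof -
  have "trace ((Tinv ** diag_mat g ** T) ** X ** (Tinv ** diag_mat h ** T) ** Y)
     = trace (Tinv ** (diag_mat g ** T ** X ** Tinv ** diag_mat h ** T ** Y))"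
    by (simp only: matrix_mul_assoc)
  also have "\<dots> = trace ((diag_mat g ** (T ** X ** Tinv) ** diag_mat h) ** (T ** Y ** Tinv))"
    by (subst trace_mul_sym) (simp only: matrix_mul_assoc)
  also have "\<dots> = (\<Sum>a\<in>UNIV. \<Sum>b\<in>UNIV. g a * (T ** X ** Tinv) $ a $ b * h b * (T ** Y ** Tinv) $ b $ a)"
    by (simp add: trace_def matrix_matrix_mult_def [of _ "T ** Y ** Tinv"] mult_diag_mat_nth
        diag_mat_mult_nth)
  finally show ?thesis .
qed

lemma geometric_tail_sums:
  fixes r :: real and z :: complex
  assumes "\<bar>r\<bar> < 1"
  shows "(\<lambda>k. complex_of_real (r ^ (k + M + 1)) * z) sums (z * complex_of_real (r ^ (M + 1) / (1 - r)))"
proof -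
  have "norm (complex_of_real r) < 1"
    using assms by simp
  then have "(\<lambda>k. (z * complex_of_real (r ^ (M + 1))) * complex_of_real r ^ k) sums
      ((z * complex_of_real (r ^ (M + 1))) * (1 / (1 - complex_of_real r)))"
    by (intro sums_mult geometric_sums)
  then show ?thesis
    by (simp add: power_add mult_ac)
qed

lemma norm_geometric_tail_le:
  fixes r t mu :: real and z :: complex
  assumes r: "\<bar>r\<bar> = 1 / t" and mu: "1 < mu" "mu \<le> t"
  shows "cmod (z * complex_of_real (r ^ (M + 1) / (1 - r))) \<le> cmod z * t / (mu ^ (M + 1) * (mu - 1))"
proof -
  have t: "1 < t"
    using mu by simp
  have "cmod (z * complex_of_real (r ^ (M + 1) / (1 - r))) = cmod z * (\<bar>r\<bar> ^ (M + 1) / \<bar>1 - r\<bar>)"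
    by (simp only: norm_mult norm_of_real abs_divide power_abs)
  also have "\<dots> \<le> cmod z * (\<bar>r\<bar> ^ (M + 1) / (1 - \<bar>r\<bar>))"
  proof -
    have "0 < 1 - \<bar>r\<bar>" "1 - \<bar>r\<bar> \<le> \<bar>1 - r\<bar>"
      using r t by auto
    then show ?thesis
      by (intro mult_left_mono divide_left_mono mult_pos_pos) auto
  qed
  also have "\<dots> = cmod z / (t ^ M * (t - 1))"
    unfolding r using t by (simp add: field_simps power_one_over)
  also have "\<dots> = cmod z * t / (t ^ (M + 1) * (t - 1))"
    using t by (simp add: field_simps)
  also have "\<dots> \<le> cmod z * t / (mu ^ (M + 1) * (mu - 1))"
    using mu t by (intro divide_left_mono mult_mono power_mono mult_pos_pos) auto
  finally show ?thesis .
qed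

lemma weighted_Cauchy_Schwarz:
  fixes w u v :: "'a \<Rightarrow> real"
  assumes "\<And>x. x \<in> I \<Longrightarrow> 0 \<le> w x"
  shows "(\<Sum>x\<in>I. w x * \<bar>u x\<bar> * \<bar>v x\<bar>)
     \<le> sqrt (\<Sum>x\<in>I. w x * (u x)\<^sup>2) * sqrt (\<Sum>x\<in>I. w x * (v x)\<^sup>2)"
proof -
  have "(\<Sum>x\<in>I. \<bar>sqrt (w x) * u x\<bar> * \<bar>sqrt (w x) * v x\<bar>)
      \<le> L2_set (\<lambda>x. sqrt (w x) * u x) I * L2_set (\<lambda>x. sqrt (w x) * v x) I"
    by (rule L2_set_mult_ineq)
  moreover have "\<bar>sqrt (w x) * u x\<bar> * \<bar>sqrt (w x) * v x\<bar> = w x * \<bar>u x\<bar> * \<bar>v x\<bar>"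
    and "(sqrt (w x) * u x)\<^sup>2 = w x * (u x)\<^sup>2" and "(sqrt (w x) * v x)\<^sup>2 = w x * (v x)\<^sup>2"
    if "x \<in> I" for x
    using assms[OF that] by (simp_all add: abs_mult power_mult_distrib mult_ac)
  ultimately show ?thesis
    unfolding L2_set_def by (metis (no_types, lifting) sum.cong)
qed

lemma double_sum_weighted_Cauchy_Schwarz:
  fixes w u v :: "'a::finite \<Rightarrow> 'b::finite \<Rightarrow> real"
  assumes "\<And>a b. 0 \<le> w a b"
  shows "(\<Sum>a\<in>UNIV. \<Sum>b\<in>UNIV. w a b * \<bar>u a b\<bar> * \<bar>v a b\<bar>)
     \<le> sqrt (\<Sum>a\<in>UNIV. \<Sum>b\<in>UNIV. w a b * (u a b)\<^sup>2) * sqrt (\<Sum>a\<in>UNIV. \<Sum>b\<in>UNIV. w a b * (v a b)\<^sup>2)"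
proof -
  have pairs: "(\<Sum>a\<in>UNIV. \<Sum>b\<in>UNIV. h a b) = (\<Sum>p\<in>UNIV. h (fst p) (snd p))"
    for h :: "'a \<Rightarrow> 'b \<Rightarrow> real"
    by (simp add: sum.cartesian_product UNIV_Times_UNIV case_prod_beta)
  show ?thesis
    unfolding pairs using assms by (intro weighted_Cauchy_Schwarz) simp
qed

definition diag_hermitian :: "('a \<Rightarrow> real) \<Rightarrow> ('a \<Rightarrow> 'a \<Rightarrow> complex) \<Rightarrow> bool" where
  "diag_hermitian s R \<longleftrightarrow> (\<forall>a b. complex_of_real (s a) * R a b = cnj (complex_of_real (s b) * R b a))"

lemma diag_hermitian_norm_swap:
  assumes "diag_hermitian s R" and "\<And>a. \<bar>s a\<bar> = 1"
  shows "cmod (R b a) = cmod (R a b)"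
proof -
  have "cmod (complex_of_real (s a) * R a b) = cmod (cnj (complex_of_real (s b) * R b a))"
    using assms(1) unfolding diag_hermitian_def by metis
  then show ?thesis
    by (simp only: complex_mod_cnj norm_mult norm_of_real assms(2) mult_1_left)
qed

lemma Re_sum_diag_hermitian:
  fixes s d :: "'a::finite \<Rightarrow> real"
  assumes "diag_hermitian s R" and "\<And>a. \<bar>s a\<bar> = 1"
  shows "Re (\<Sum>a\<in>UNIV. \<Sum>b\<in>UNIV. complex_of_real (s a * d a) * R a b * complex_of_real (s b * d b) * R b a)
     = (\<Sum>a\<in>UNIV. \<Sum>b\<in>UNIV. d a * d b * (cmod (R a b))\<^sup>2)"
proof -
  have summand: "complex_of_real (s a * d a) * R a b * complex_of_real (s b * d b) * R b a
      = complex_of_real (d a * d b * (cmod (R a b))\<^sup>2)" for a b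
  proof -
    have "complex_of_real (s a * d a) * R a b * complex_of_real (s b * d b) * R b a
        = complex_of_real (d a * d b) * ((complex_of_real (s a) * R a b) * (complex_of_real (s b) * R b a))"
      by (simp add: mult_ac)
    also have "\<dots> = complex_of_real (d a * d b) * ((complex_of_real (s a) * R a b) * cnj (complex_of_real (s a) * R a b))"
      using assms(1) unfolding diag_hermitian_def by metis
    also have "\<dots> = complex_of_real (d a * d b * (cmod (R a b))\<^sup>2)"
      by (simp only: complex_norm_square [symmetric] norm_mult norm_of_real assms(2) mult_1_left of_real_mult)
    finally show ?thesis .
  qed
  show ?thesis
    unfolding summand by (simp add: Re_sum)
qed

lemma tail_double_sum_bound:
  fixes s d :: "'a::finite \<Rightarrow> real" and P Q :: "'a \<Rightarrow> 'a \<Rightarrow> complex" and lam :: real and M :: nat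
  assumes s: "\<And>a. \<bar>s a\<bar> = 1" and d: "\<And>a. lam \<le> d a" and lam: "1 < lam"
    and P: "diag_hermitian s P" and Q: "diag_hermitian s Q"
  defines "f \<equiv> \<lambda>a. complex_of_real (s a * d a)"
  defines "g \<equiv> \<lambda>k. \<Sum>a\<in>UNIV. \<Sum>b\<in>UNIV.
             inverse (f a) ^ (k + M + 1) * P a b * inverse (f b) ^ (k + M + 1) * Q b a"
  shows "summable g \<and> cmod ((1/2) * suminf g)
     \<le> sqrt (Re (\<Sum>a\<in>UNIV. \<Sum>b\<in>UNIV. f a * P a b * f b * P b a))
       * sqrt (Re (\<Sum>a\<in>UNIV. \<Sum>b\<in>UNIV. f a * Q a b * f b * Q b a))
       / (2 * lam ^ (2 * (M + 1)) * (lam\<^sup>2 - 1))"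
proof -
  define t where "t a b = d a * d b" for a b
  define r where "r a b = inverse (s a * d a * (s b * d b))" for a b
  define mu where "mu = lam\<^sup>2"
  define B where "B = 1 / (mu ^ (M + 1) * (mu - 1))"
  have mu: "1 < mu"
    unfolding mu_def using lam by (simp add: one_less_power)
  have t: "mu \<le> t a b" for a b
    unfolding t_def mu_def power2_eq_square using d[of a] d[of b] lam by (intro mult_mono) auto
  have t0: "0 \<le> t a b" for a b
    using t[of a b] mu by linarith
  have r: "\<bar>r a b\<bar> = 1 / t a b" for a b
    using d[of a] d[of b] lam unfolding r_def t_def by (simp add: abs_mult s divide_inverse abs_inverse)
  have r1: "\<bar>r a b\<bar> < 1" for a b
    using r[of a b] t[of a b] mu by simp
  define G where "G = (\<Sum>a\<in>UNIV. \<Sum>b\<in>UNIV. (P a b * Q b a) * complex_of_real (r a b ^ (M + 1) / (1 - r a b)))"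
  have g_eq: "g k = (\<Sum>a\<in>UNIV. \<Sum>b\<in>UNIV. complex_of_real (r a b ^ (k + M + 1)) * (P a b * Q b a))" for k
    unfolding g_def f_def r_def by (simp add: power_mult_distrib mult_ac)
  have g: "g sums G"
    unfolding g_eq [abs_def] G_def by (intro sums_sum geometric_tail_sums r1)
  have "cmod G \<le> (\<Sum>a\<in>UNIV. \<Sum>b\<in>UNIV. cmod ((P a b * Q b a) * complex_of_real (r a b ^ (M + 1) / (1 - r a b))))"
    unfolding G_def by (rule order_trans[OF norm_sum sum_mono]) (rule norm_sum)
  also have "\<dots> \<le> (\<Sum>a\<in>UNIV. \<Sum>b\<in>UNIV. B * (t a b * \<bar>cmod (P a b)\<bar> * \<bar>cmod (Q a b)\<bar>))"
  proof (intro sum_mono)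
    fix a b
    have "cmod ((P a b * Q b a) * complex_of_real (r a b ^ (M + 1) / (1 - r a b)))
        \<le> cmod (P a b * Q b a) * t a b / (mu ^ (M + 1) * (mu - 1))"
      by (rule norm_geometric_tail_le[OF r mu t])
    also have "\<dots> = B * (t a b * \<bar>cmod (P a b)\<bar> * \<bar>cmod (Q a b)\<bar>)"
      by (simp add: B_def norm_mult diag_hermitian_norm_swap[OF Q s])
    finally show "cmod ((P a b * Q b a) * complex_of_real (r a b ^ (M + 1) / (1 - r a b)))
        \<le> B * (t a b * \<bar>cmod (P a b)\<bar> * \<bar>cmod (Q a b)\<bar>)" .
  qed
  also have "\<dots> = B * (\<Sum>a\<in>UNIV. \<Sum>b\<in>UNIV. t a b * \<bar>cmod (P a b)\<bar> * \<bar>cmod (Q a b)\<bar>)"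
    by (simp add: sum_distrib_left)
  also have "\<dots> \<le> B * (sqrt (Re (\<Sum>a\<in>UNIV. \<Sum>b\<in>UNIV. f a * P a b * f b * P b a))
                     * sqrt (Re (\<Sum>a\<in>UNIV. \<Sum>b\<in>UNIV. f a * Q a b * f b * Q b a)))"
    unfolding f_def Re_sum_diag_hermitian[OF P s] Re_sum_diag_hermitian[OF Q s] t_def
    using mu t0[unfolded t_def] by (intro mult_left_mono double_sum_weighted_Cauchy_Schwarz) (simp_all add: B_def)
  finally have G_le: "cmod G \<le> B * (sqrt (Re (\<Sum>a\<in>UNIV. \<Sum>b\<in>UNIV. f a * P a b * f b * P b a))
                     * sqrt (Re (\<Sum>a\<in>UNIV. \<Sum>b\<in>UNIV. f a * Q a b * f b * Q b a)))" .
  have B: "B / 2 = 1 / (2 * lam ^ (2 * (M + 1)) * (lam\<^sup>2 - 1))"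
    unfolding B_def mu_def by (simp add: power_mult power2_eq_square algebra_simps)
  have "cmod ((1/2) * suminf g) = cmod G / 2"
    using sums_unique[OF g] by (simp add: norm_mult)
  also have "\<dots> \<le> sqrt (Re (\<Sum>a\<in>UNIV. \<Sum>b\<in>UNIV. f a * P a b * f b * P b a))
       * sqrt (Re (\<Sum>a\<in>UNIV. \<Sum>b\<in>UNIV. f a * Q a b * f b * Q b a))
       / (2 * lam ^ (2 * (M + 1)) * (lam\<^sup>2 - 1))"
    using G_le B by (simp add: field_simps)
  finally show ?thesis
    using sums_summable[OF g] by blast
qed

definition K_sign :: "'n + 'n \<Rightarrow> real" where
  "K_sign = case_sum (\<lambda>_. 1) (\<lambda>_. -1)"

lemma abs_K_sign: "\<bar>K_sign a\<bar> = 1"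
  by (simp add: K_sign_def split: sum.split)

lemma Kmat_eq_diag_mat: "(Kmat :: ('n::finite) cmat) = diag_mat (\<lambda>a. complex_of_real (K_sign a))"
  by (simp add: vec_eq_iff Kmat_def diag_mat_def K_sign_def split: sum.split)

lemma diagLL_eq_diag_mat: "diagLL L = diag_mat (\<lambda>a. complex_of_real (case_sum L L a))"
  by (simp add: vec_eq_iff diagLL_def diag_mat_def)

lemma Kmat_mult_Kmat: "(Kmat :: ('n::finite) cmat) ** Kmat = mat 1"
proof -
  have "K_sign a * K_sign a = 1" for a :: "'n + 'n"
    by (simp add: K_sign_def split: sum.split)
  then have "complex_of_real (K_sign a) * complex_of_real (K_sign a) = 1" for a :: "'n + 'n"
    by (metis of_real_1 of_real_mult)
  then show ?thesis
    unfolding Kmat_eq_diag_mat diag_mat_mult_diag_mat mat_1_eq_diag_mat by simp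
qed

lemma mult_Kmat_mult_Kmat: "X ** (Kmat :: ('n::finite) cmat) ** Kmat = X"
  by (metis matrix_mul_assoc Kmat_mult_Kmat matrix_mul_rid)

lemma adj_Kmat: "adj (Kmat :: ('n::finite) cmat) = Kmat"
  unfolding Kmat_eq_diag_mat adj_diag_mat by simp

lemma adj_diagLL: "adj (diagLL L) = diagLL L"
  unfolding diagLL_eq_diag_mat adj_diag_mat by simp

lemma adj_gaussian_cov: "gaussian_cov \<sigma> \<Longrightarrow> adj \<sigma> = \<sigma>"
  unfolding gaussian_cov_def by (auto simp: adj_mult adj_diagLL matrix_mul_assoc)

lemma symplectic_c_inverse:
  assumes "symplectic_c S"
  shows "(Kmat ** S ** Kmat) ** adj S = mat 1"
proof -
  have SKS: "S ** Kmat ** adj S = Kmat"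
    using assms by (simp add: symplectic_c_def)
  have "S ** (Kmat ** adj S ** Kmat) = (S ** Kmat ** adj S) ** Kmat"
    by (simp only: matrix_mul_assoc)
  also have "\<dots> = mat 1"
    by (simp only: SKS Kmat_mult_Kmat)
  finally have "(Kmat ** adj S ** Kmat) ** S = mat 1"
    using matrix_left_right_inverse by blast
  moreover have "adj ((Kmat ** adj S ** Kmat) ** S) = adj S ** (Kmat ** S ** Kmat)"
    by (simp only: adj_mult adj_Kmat adj_adj matrix_mul_assoc)
  ultimately have "adj S ** (Kmat ** S ** Kmat) = mat 1"
    by simp
  then show ?thesis
    using matrix_left_right_inverse by blast
qed

lemma Kmat_mult_williamson:
  "Kmat ** (S ** diagLL L ** adj S)
     = (Kmat ** S ** Kmat) ** diag_mat (\<lambda>a. complex_of_real (K_sign a * case_sum L L a)) ** adj S"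
proof -
  have "diag_mat (\<lambda>a. complex_of_real (K_sign a * case_sum L L a)) = Kmat ** diagLL L"
    by (simp add: Kmat_eq_diag_mat diagLL_eq_diag_mat diag_mat_mult_diag_mat)
  then show ?thesis
    by (simp add: matrix_mul_assoc mult_Kmat_mult_Kmat)
qed

lemma sympl_eigs_williamson:
  assumes "symplectic_c S" and "\<And>k. 0 < L k"
  shows "sympl_eigs (S ** diagLL L ** adj S) = range L"
proof -
  have "l \<in> sympl_eigs (S ** diagLL L ** adj S) \<longleftrightarrow>
      0 < l \<and> complex_of_real l \<in> range (\<lambda>a. complex_of_real (K_sign a * case_sum L L a))" for l
    unfolding sympl_eigs_def Kmat_mult_williamson
    using eigenvalue_similar_diag_mat_iff[OF symplectic_c_inverse[OF assms(1)]] by simp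
  also have "\<dots> l \<longleftrightarrow> l \<in> range L" for l
  proof
    assume "0 < l \<and> complex_of_real l \<in> range (\<lambda>a. complex_of_real (K_sign a * case_sum L L a))"
    then obtain a where l: "0 < l" "l = K_sign a * case_sum L L a"
      by (auto simp flip: of_real_mult)
    show "l \<in> range L"
    proof (cases a)
      case (Inr k)
      then show ?thesis
        using l assms(2)[of k] by (simp add: K_sign_def)
    qed (use l in \<open>simp add: K_sign_def\<close>)
  next
    assume "l \<in> range L"
    then obtain k where l: "l = K_sign (Inl k) * case_sum L L (Inl k)"
      by (auto simp: K_sign_def)
    then have "complex_of_real l \<in> range (\<lambda>a. complex_of_real (K_sign a * case_sum L L a))"
      by (intro range_eqI[where x="Inl k"]) simp
    then show "0 < l \<and> complex_of_real l \<in> range (\<lambda>a. complex_of_real (K_sign a * case_sum L L a))"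
      using assms(2)[of k] l by (simp add: K_sign_def)
  qed
  finally show ?thesis
    by blast
qed

lemma adj_symplectic_transform_Kmat_mult:
  fixes S X :: "('n::finite) cmat"
  assumes "adj X = X"
  defines "P \<equiv> adj S ** (Kmat ** X) ** (Kmat ** S ** Kmat)"
  shows "diag_hermitian K_sign (\<lambda>a b. P $ a $ b)"
proof -
  have "adj (Kmat ** P) = Kmat ** P"
    unfolding P_def by (simp add: adj_mult adj_Kmat assms matrix_mul_assoc)
  then have "(Kmat ** P) $ a $ b = adj (Kmat ** P) $ a $ b" for a b
    by simp
  then show ?thesis
    by (simp add: diag_hermitian_def adj_def Kmat_eq_diag_mat diag_mat_mult_nth)
qed

lemma adj_pderiv_i_gaussian_cov:
  assumes "open U" and "x \<in> U" and "\<forall>y\<in>U. gaussian_cov (\<sigma> y)" and "\<sigma> differentiable (at x)"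
  shows "adj (pderiv_i \<sigma> x i) = pderiv_i \<sigma> x i"
  unfolding pderiv_i_def using assms
  by (intro adj_frechet_derivative_hermitian[where U=U]) (auto simp: adj_gaussian_cov)

lemma tail_trace_bound_gaussian_cov:
  fixes \<sigma> X Y :: "('n::finite) cmat" and M :: nat
  assumes "gaussian_cov \<sigma>" and "adj X = X" and "adj Y = Y" and "1 < min_sympl_eig \<sigma>"
  defines "A \<equiv> Kmat ** \<sigma>" and "lmin \<equiv> min_sympl_eig \<sigma>"
  shows "summable (\<lambda>k. trace (mpow (matrix_inv A) (k + M + 1) ** (Kmat ** X) **
                               mpow (matrix_inv A) (k + M + 1) ** (Kmat ** Y)))
    \<and> cmod ((1/2) * (\<Sum>k. trace (mpow (matrix_inv A) (k + M + 1) ** (Kmat ** X) **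
                               mpow (matrix_inv A) (k + M + 1) ** (Kmat ** Y))))
      \<le> sqrt (Re (trace ((A ** (Kmat ** X)) ** (A ** (Kmat ** X)))))
        * sqrt (Re (trace ((A ** (Kmat ** Y)) ** (A ** (Kmat ** Y)))))
         / (2 * lmin ^ (2 * (M + 1)) * (lmin\<^sup>2 - 1))"
proof -
  obtain S L where S: "symplectic_c S" and L: "\<And>k. 1 \<le> L k" and \<sigma>: "\<sigma> = S ** diagLL L ** adj S"
    using assms(1) unfolding gaussian_cov_def by blast
  define T Tinv where "T = adj S" and "Tinv = Kmat ** S ** Kmat"
  define f where "f a = complex_of_real (K_sign a * case_sum L L a)" for a
  define P where "P Z = T ** (Kmat ** Z) ** Tinv" for Z
  have TinvT: "Tinv ** T = mat 1"
    unfolding T_def Tinv_def by (rule symplectic_c_inverse[OF S])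
  have A: "A = Tinv ** diag_mat f ** T"
    unfolding A_def \<sigma> Kmat_mult_williamson T_def Tinv_def f_def ..
  have L_pos: "0 < case_sum L L a" for a
    using L by (cases a) (auto intro: less_le_trans[OF zero_less_one])
  have "f a \<noteq> 0" for a
    using abs_K_sign[of a] L_pos[of a] by (auto simp: f_def)
  then have inv_A: "matrix_inv A = Tinv ** diag_mat (\<lambda>a. inverse (f a)) ** T"
    unfolding A by (rule matrix_inv_similar_diag_mat[OF TinvT])
  have trace_powers: "trace (mpow (matrix_inv A) n ** (Kmat ** X) ** mpow (matrix_inv A) n ** (Kmat ** Y))
      = (\<Sum>a\<in>UNIV. \<Sum>b\<in>UNIV. inverse (f a) ^ n * P X $ a $ b * inverse (f b) ^ n * P Y $ b $ a)" for n
    unfolding P_def inv_A mpow_similar_diag_mat[OF TinvT] by (rule trace_similar_diag_mat_sandwich)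
  have trace_square: "trace ((A ** (Kmat ** Z)) ** (A ** (Kmat ** Z)))
      = (\<Sum>a\<in>UNIV. \<Sum>b\<in>UNIV. f a * P Z $ a $ b * f b * P Z $ b $ a)" for Z
    unfolding A P_def trace_similar_diag_mat_sandwich [symmetric] by (simp only: matrix_mul_assoc)
  have "sympl_eigs \<sigma> = range L"
    unfolding \<sigma> using L_pos by (intro sympl_eigs_williamson[OF S]) (metis sum.case(1))
  then have "lmin = Min (range L)"
    by (simp add: lmin_def min_sympl_eig_def)
  then have "lmin \<le> case_sum L L a" for a
    by (cases a) simp_all
  moreover have "diag_hermitian K_sign (\<lambda>a b. P Z $ a $ b)" if "adj Z = Z" for Z
    unfolding P_def T_def Tinv_def using that by (rule adj_symplectic_transform_Kmat_mult)
  ultimately show ?thesis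
    unfolding trace_powers trace_square f_def
    using abs_K_sign assms(2-4) by (intro tail_double_sum_bound) (simp_all add: lmin_def)
qed

theorem mainTheorem5:
  fixes \<sigma> :: "real ^ 'p \<Rightarrow> ('n::finite) cmat"
    and U :: "(real ^ 'p) set" and \<epsilon> :: "real ^ 'p" and i j :: 'p and M :: nat
  assumes "open U" and "\<epsilon> \<in> U"
    and "\<forall>x\<in>U. gaussian_cov (\<sigma> x)"
    and "\<forall>x\<in>U. \<sigma> differentiable (at x)"
    and "min_sympl_eig (\<sigma> \<epsilon>) > 1"
  defines "A \<equiv> Kmat ** \<sigma> \<epsilon>"
    and "dAi \<equiv> Kmat ** pderiv_i \<sigma> \<epsilon> i"
    and "dAj \<equiv> Kmat ** pderiv_i \<sigma> \<epsilon> j"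
    and "lmin \<equiv> min_sympl_eig (\<sigma> \<epsilon>)"
  shows "summable (\<lambda>k. trace (mpow (matrix_inv A) (k + M + 1) ** dAi **
                               mpow (matrix_inv A) (k + M + 1) ** dAj))
    \<and> cmod ((1/2) * (\<Sum>k. trace (mpow (matrix_inv A) (k + M + 1) ** dAi **
                               mpow (matrix_inv A) (k + M + 1) ** dAj)))
      \<le> sqrt (Re (trace ((A ** dAi) ** (A ** dAi)))) * sqrt (Re (trace ((A ** dAj) ** (A ** dAj))))
         / (2 * lmin ^ (2 * (M + 1)) * (lmin\<^sup>2 - 1))"
proof -
  have "adj (pderiv_i \<sigma> \<epsilon> l) = pderiv_i \<sigma> \<epsilon> l" for l
    using assms(1-4) by (intro adj_pderiv_i_gaussian_cov) auto
  then show ?thesis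
    unfolding A_def dAi_def dAj_def lmin_def
    using assms(2,3,5) by (intro tail_trace_bound_gaussian_cov) auto
qed

end
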